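(* Let $\vartheta_1,\ldots,\vartheta_t$ be real numbers, $\beta,\delta,\kappa,\lambda$ positive real numbers with $\kappa\le 1/t$, and $\alpha,\gamma$ real numbers. Assume there is a sequence $(P_n)_{n\ge0}$ of polynomials in $\mathbb{Z}[X_1,\ldots,X_t]$, with $P_n$ of total degree at most $\delta n^{\kappa}+o(n^{\kappa})$ and length at most $e^{\beta n+o(n)}$, such that $$e^{-\lambda n^{1+t\kappa}-(\alpha+o(1))n}\le|P_n(\vartheta_1,\ldots,\vartheta_t)|\le e^{-\lambda n^{1+t\kappa}-(\gamma+o(1))n}.$$ Then $\lambda(1-2\delta^t/t!)\le \delta^t(\alpha+\beta-\gamma)/t!$ when $\kappa=1/t$, and $\lambda\le\delta^t(\alpha+\beta-\gamma)/t!$ when $\kappa<1/t$.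
   Context: The length of a polynomial with integer coefficients is the sum of the absolute values of its coefficients. Little-$o$ terms are as $n\to\infty$. *)

theory Defs
  imports Complex_Main "HOL-Library.Landau_Symbols"
begin

text \<open>Multivariate integer polynomials in the variables X_0,...,X_(t-1), represented by
  their coefficient function on exponent vectors (nat => nat).\<close>

type_synonym mpoly_int = "(nat \<Rightarrow> nat) \<Rightarrow> int"

definition msupp :: "mpoly_int \<Rightarrow> (nat \<Rightarrow> nat) set" where
  "msupp P = {e. P e \<noteq> 0}"

definition is_mpoly :: "nat \<Rightarrow> mpoly_int \<Rightarrow> bool" where
  "is_mpoly t P \<longleftrightarrow> finite (msupp P) \<and> (\<forall>e\<in>msupp P. \<forall>i\<ge>t. e i = 0)"

definition total_deg_le :: "nat \<Rightarrow> mpoly_int \<Rightarrow> real \<Rightarrow> bool" where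
  "total_deg_le t P D \<longleftrightarrow> (\<forall>e\<in>msupp P. real (\<Sum>i<t. e i) \<le> D)"

definition mpoly_length :: "mpoly_int \<Rightarrow> real" where
  "mpoly_length P = (\<Sum>e\<in>msupp P. real_of_int \<bar>P e\<bar>)"

definition mpoly_eval :: "nat \<Rightarrow> mpoly_int \<Rightarrow> (nat \<Rightarrow> real) \<Rightarrow> real" where
  "mpoly_eval t P \<theta> = (\<Sum>e\<in>msupp P. real_of_int (P e) * (\<Prod>i<t. \<theta> i ^ e i))"

end

theory Submission
  imports Defs "Jordan_Normal_Form.Determinant"
begin

text \<open>
  The proof is a determinant elimination argument.

  Fix m and write y_k = P_k(theta) for k \<le> m.  Each y_k is a linear form
  \<Sum>e. Q_k(e) v_e with integer coefficients Q_k(e) in the values v_e = theta^e of the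
  monomials e of degree at most D(m) = delta m^kappa + o(m^kappa).  Walking from row m
  down to row 0 and keeping a set of rows with a nonvanishing integer minor, Laplace
  expansion gives the purely algebraic estimate (lemma linear_forms.elimination_bound)
    |y_0| \<le> |E| l_0 |y_m| \<Prod>k\<in>K. |E| (|y_k| l_(k+1) / |y_(k+1)| + l_k),   |K| < |E|,
  where E is the set of monomials and l_k bounds the coefficients of the k-th form; the
  integrality of the coefficients enters through the fact that a nonzero integer
  determinant has absolute value at least 1.

  The second half of the file (locale small_values) feeds the hypotheses of the theorem
  into this estimate: |E| \<le> (D(m)+t)^t/t!, the lengths are e^(beta m + o(m)), the
  ratios |y_k/y_(k+1)| are at most e^(lam (1+sigma) m^sigma + (alpha-gamma) m + o(m))
  with sigma = t kappa, and |y_0| \<ge> 1 by the lower bound at n = 0.  Taking logarithms,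
  dividing by m^(1+sigma) and letting m \<rightarrow> \<infinity> yields
    lam \<le> delta^t/t! (alpha + beta - gamma + lam (1+sigma) rho),  rho = lim m^(sigma-1),
  which is the theorem (rho = 1 if kappa = 1/t, rho = 0 if kappa < 1/t).
\<close>


subsection \<open>Matrices indexed by lists of row and column labels\<close>

text \<open>Deleting the i-th element of a list; it describes the labels of a minor.\<close>

definition remove_nth :: "nat \<Rightarrow> 'a list \<Rightarrow> 'a list" where
  "remove_nth i xs = take i xs @ drop (Suc i) xs"

lemma length_remove_nth [simp]: "i < length xs \<Longrightarrow> length (remove_nth i xs) = length xs - 1"
  unfolding remove_nth_def by simp

lemma nth_remove_nth:
  "i < length xs \<Longrightarrow> k < length xs - 1 \<Longrightarrow>
   remove_nth i xs ! k = (if k < i then xs ! k else xs ! Suc k)"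
  unfolding remove_nth_def by (auto simp: nth_append min_def)

lemma remove_nth_Suc_Cons [simp]: "remove_nth (Suc j) (x # xs) = x # remove_nth j xs"
  unfolding remove_nth_def by simp

lemma remove_nth_0_Cons [simp]: "remove_nth 0 (x # xs) = xs"
  unfolding remove_nth_def by simp

lemma remove_nth_map: "remove_nth j (map f xs) = map f (remove_nth j xs)"
  unfolding remove_nth_def by (simp add: take_map drop_map)

lemma set_remove_nth: "set (remove_nth j xs) \<subseteq> set xs"
  unfolding remove_nth_def by (auto dest: in_set_takeD in_set_dropD)

lemma distinct_remove_nth: "distinct xs \<Longrightarrow> distinct (remove_nth j xs)"
  unfolding remove_nth_def by (simp add: set_take_disj_set_drop_if_distinct)

text \<open>The matrix (ent r c) with rows labelled by rs and columns labelled by cs.  Working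
  with labels rather than indices makes minors again matrices of the same kind.\<close>

definition label_mat :: "('r \<Rightarrow> 'c \<Rightarrow> 'a) \<Rightarrow> 'r list \<Rightarrow> 'c list \<Rightarrow> 'a mat" where
  "label_mat ent rs cs = mat (length rs) (length cs) (\<lambda>(i, j). ent (rs ! i) (cs ! j))"

lemma label_mat_carrier: "label_mat ent rs cs \<in> carrier_mat (length rs) (length cs)"
  unfolding label_mat_def by auto

lemma index_label_mat [simp]:
  "i < length rs \<Longrightarrow> j < length cs \<Longrightarrow> label_mat ent rs cs $$ (i, j) = ent (rs ! i) (cs ! j)"
  unfolding label_mat_def by simp

lemma mat_delete_label_mat:
  assumes "i < length rs" "j < length cs"
  shows "mat_delete (label_mat ent rs cs) i j = label_mat ent (remove_nth i rs) (remove_nth j cs)"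
proof (rule eq_matI)
  fix i' j'
  assume "i' < dim_row (label_mat ent (remove_nth i rs) (remove_nth j cs))"
    and "j' < dim_col (label_mat ent (remove_nth i rs) (remove_nth j cs))"
  hence ij: "i' < length rs - 1" "j' < length cs - 1" using assms by (simp_all add: label_mat_def)
  have "mat_delete (label_mat ent rs cs) i j $$ (i', j') =
      label_mat ent rs cs $$ (if i' < i then i' else Suc i', if j' < j then j' else Suc j')"
    unfolding mat_delete_def using ij by (simp add: label_mat_def)
  also have "\<dots> = ent (remove_nth i rs ! i') (remove_nth j cs ! j')"
    using ij assms by (simp add: nth_remove_nth)
  finally show "mat_delete (label_mat ent rs cs) i j $$ (i', j') =
      label_mat ent (remove_nth i rs) (remove_nth j cs) $$ (i', j')"
    using ij assms by simp
qed (use assms in \<open>simp_all add: label_mat_def\<close>)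

lemma laplace_label_mat_row:
  fixes ent :: "'r \<Rightarrow> 'c \<Rightarrow> 'a :: comm_ring_1"
  assumes "length cs = Suc (length rs)"
  shows "det (label_mat ent (a # rs) cs) =
     (\<Sum>j<length cs. ent a (cs ! j) * ((-1) ^ j * det (label_mat ent rs (remove_nth j cs))))"
proof -
  have "det (label_mat ent (a # rs) cs) =
      (\<Sum>j<length cs. label_mat ent (a # rs) cs $$ (0, j) * cofactor (label_mat ent (a # rs) cs) 0 j)"
    by (rule laplace_expansion_row) (use label_mat_carrier[of ent "a # rs" cs] assms in auto)
  also have "\<dots> = (\<Sum>j<length cs. ent a (cs ! j) * ((-1) ^ j * det (label_mat ent rs (remove_nth j cs))))"
    by (rule sum.cong, simp) (use assms in \<open>auto simp: cofactor_def mat_delete_label_mat\<close>)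
  finally show ?thesis .
qed

lemma laplace_label_mat_col:
  fixes ent :: "'r \<Rightarrow> 'c \<Rightarrow> 'a :: comm_ring_1"
  assumes "length rs = Suc (length cs)"
  shows "det (label_mat ent rs (c # cs)) =
     (\<Sum>i<length rs. ent (rs ! i) c * ((-1) ^ i * det (label_mat ent (remove_nth i rs) cs)))"
proof -
  have "det (label_mat ent rs (c # cs)) =
      (\<Sum>i<length rs. label_mat ent rs (c # cs) $$ (i, 0) * cofactor (label_mat ent rs (c # cs)) i 0)"
    by (rule laplace_expansion_column) (use label_mat_carrier[of ent rs "c # cs"] assms in auto)
  also have "\<dots> = (\<Sum>i<length rs. ent (rs ! i) c * ((-1) ^ i * det (label_mat ent (remove_nth i rs) cs)))"
    by (rule sum.cong, simp) (use assms in \<open>auto simp: cofactor_def mat_delete_label_mat\<close>)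
  finally show ?thesis .
qed

lemma det_label_mat_col_linear:
  fixes ent :: "'r \<Rightarrow> 'c \<Rightarrow> 'a :: comm_ring_1"
  assumes len: "length rs = Suc (length cs)" and "finite S"
    and lin: "\<And>r. r \<in> set rs \<Longrightarrow> ent r c = (\<Sum>e\<in>S. w e * ent r (h e))"
  shows "det (label_mat ent rs (c # cs)) = (\<Sum>e\<in>S. w e * det (label_mat ent rs (h e # cs)))"
proof -
  have "det (label_mat ent rs (c # cs)) = (\<Sum>i<length rs.
      (\<Sum>e\<in>S. w e * ent (rs ! i) (h e)) * ((-1) ^ i * det (label_mat ent (remove_nth i rs) cs)))"
    unfolding laplace_label_mat_col[OF len] by (rule sum.cong) (auto simp: lin)
  also have "\<dots> = (\<Sum>e\<in>S. w e * (\<Sum>i<length rs.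
      ent (rs ! i) (h e) * ((-1) ^ i * det (label_mat ent (remove_nth i rs) cs))))"
    by (simp only: sum_distrib_right sum_distrib_left mult.assoc sum.swap[where A = "{..<length rs}"])
  also have "\<dots> = (\<Sum>e\<in>S. w e * det (label_mat ent rs (h e # cs)))"
    by (simp only: laplace_label_mat_col[OF len])
  finally show ?thesis .
qed

lemma det_label_mat_equal_rows:
  assumes "length rs = length cs" "i < length rs" "j < length rs" "i \<noteq> j" "rs ! i = rs ! j"
  shows "det (label_mat ent rs cs) = 0"
proof (rule det_identical_rows[OF _ assms(4)])
  show "label_mat ent rs cs \<in> carrier_mat (length rs) (length rs)"
    using label_mat_carrier[of ent rs cs] assms(1) by simp
  show "row (label_mat ent rs cs) i = row (label_mat ent rs cs) j"
    by (rule eq_vecI) (use assms in \<open>auto simp: label_mat_def\<close>)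
qed (use assms in auto)

lemma det_label_mat_equal_cols:
  assumes "length rs = length cs" "i < length cs" "j < length cs" "i \<noteq> j" "cs ! i = cs ! j"
  shows "det (label_mat ent rs cs) = 0"
proof (rule det_identical_columns[OF _ assms(4)])
  show "label_mat ent rs cs \<in> carrier_mat (length cs) (length cs)"
    using label_mat_carrier[of ent rs cs] assms(1) by simp
  show "col (label_mat ent rs cs) i = col (label_mat ent rs cs) j"
    by (rule eq_vecI) (use assms in \<open>auto simp: label_mat_def\<close>)
qed (use assms in auto)

lemma det_label_mat_of_int:
  "det (label_mat (\<lambda>r c. real_of_int (ent r c)) rs cs) = real_of_int (det (label_mat ent rs cs))"
proof -
  have "label_mat (\<lambda>r c. real_of_int (ent r c)) rs cs = map_mat real_of_int (label_mat ent rs cs)"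
    by (rule eq_matI) (simp_all add: label_mat_def)
  thus ?thesis by (simp only: of_int_hom.hom_det)
qed

lemma det_label_mat_Nil [simp]: "det (label_mat ent [] []) = 1"
  by (simp add: label_mat_def det_def)


subsection \<open>An elimination estimate for linear forms with integer coefficients\<close>

locale linear_forms =
  fixes y :: "nat \<Rightarrow> real" and Q :: "nat \<Rightarrow> 'c \<Rightarrow> int" and E :: "'c set"
    and v :: "'c \<Rightarrow> real" and l :: "nat \<Rightarrow> real" and m :: nat
  assumes finite_E: "finite E"
    and y_eq: "\<And>k. k \<le> m \<Longrightarrow> y k = (\<Sum>e\<in>E. v e * of_int (Q k e))"
    and coeff_le: "\<And>k e. k \<le> m \<Longrightarrow> \<bar>real_of_int (Q k e)\<bar> \<le> l k"
    and y_nonzero: "\<And>k. k \<le> m \<Longrightarrow> y k \<noteq> 0"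
begin

definition entry :: "nat \<Rightarrow> 'c option \<Rightarrow> real" where
  "entry k c = (case c of None \<Rightarrow> y k | Some e \<Rightarrow> of_int (Q k e))"

definition col_lists :: "nat \<Rightarrow> 'c list set" where
  "col_lists r = {cs. distinct cs \<and> set cs \<subseteq> E \<and> length cs = r}"

definition int_minor :: "nat list \<Rightarrow> 'c list \<Rightarrow> real" where
  "int_minor rs T = det (label_mat entry rs (map Some T))"

definition mixed_minor :: "nat list \<Rightarrow> 'c list \<Rightarrow> real" where
  "mixed_minor rs S = det (label_mat entry rs (None # map Some S))"

definition dependent :: "nat list \<Rightarrow> nat \<Rightarrow> bool" where
  "dependent rs b \<longleftrightarrow> (\<forall>T\<in>col_lists (Suc (length rs)). int_minor (b # rs) T = 0)"

definition mixed_bounded :: "nat list \<Rightarrow> real \<Rightarrow> bool" where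
  "mixed_bounded rs B \<longleftrightarrow> (\<forall>S\<in>col_lists (length rs - 1). \<bar>mixed_minor rs S\<bar> \<le> B)"

lemma l_nonneg: "k \<le> m \<Longrightarrow> 0 \<le> l k"
  using coeff_le[of k undefined] by linarith

lemma col_lists_remove_nth: "T \<in> col_lists r \<Longrightarrow> j < r \<Longrightarrow> remove_nth j T \<in> col_lists (r - 1)"
  unfolding col_lists_def using set_remove_nth[of j T] distinct_remove_nth[of T j] by auto

lemma col_lists_le_card: "T \<in> col_lists r \<Longrightarrow> r \<le> card E"
  unfolding col_lists_def using finite_E by (metis (mono_tags) card_mono distinct_card mem_Collect_eq)

lemma int_minor_ge_1:
  assumes "int_minor rs T \<noteq> 0"
  shows "1 \<le> \<bar>int_minor rs T\<bar>"
proof -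
  have "label_mat entry rs (map Some T) = label_mat (\<lambda>r c. real_of_int (Q r c)) rs T"
    by (rule eq_matI) (simp_all add: label_mat_def entry_def)
  hence int: "int_minor rs T = of_int (det (label_mat Q rs T))"
    unfolding int_minor_def by (simp add: det_label_mat_of_int)
  hence "det (label_mat Q rs T) \<noteq> 0" using assms by auto
  hence "1 \<le> \<bar>det (label_mat Q rs T)\<bar>" by linarith
  thus ?thesis unfolding int by linarith
qed

lemma dependent_member:
  assumes "b \<in> set rs"
  shows "dependent rs b"
  unfolding dependent_def int_minor_def
proof
  fix T assume T: "T \<in> col_lists (Suc (length rs))"
  obtain i where i: "i < length rs" "rs ! i = b" using assms by (meson in_set_conv_nth)
  show "det (label_mat entry (b # rs) (map Some T)) = 0"
    by (rule det_label_mat_equal_rows[of _ _ 0 "Suc i"]) (use T i in \<open>auto simp: col_lists_def\<close>)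
qed

text \<open>The value column is a linear combination of the coefficient columns, so a mixed
  minor of a dependent set of rows vanishes.\<close>

lemma mixed_minor_dependent:
  assumes dep: "dependent rs b" and rows: "set (b # rs) \<subseteq> {..m}" and T: "T \<in> col_lists (length rs)"
  shows "mixed_minor (b # rs) T = 0"
proof -
  have len: "length (b # rs) = Suc (length (map Some T))" using T by (simp add: col_lists_def)
  have "mixed_minor (b # rs) T = (\<Sum>e\<in>E. v e * det (label_mat entry (b # rs) (Some e # map Some T)))"
    unfolding mixed_minor_def
  proof (rule det_label_mat_col_linear[OF len finite_E])
    fix r assume "r \<in> set (b # rs)"
    hence "r \<le> m" using rows by auto
    thus "entry r None = (\<Sum>e\<in>E. v e * entry r (Some e))" by (simp add: entry_def y_eq)
  qed
  also have "\<dots> = 0"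
  proof (rule sum.neutral, rule ballI)
    fix e assume e: "e \<in> E"
    show "v e * det (label_mat entry (b # rs) (Some e # map Some T)) = 0"
    proof (cases "e \<in> set T")
      case True
      then obtain i where i: "i < length T" "T ! i = e" by (meson in_set_conv_nth)
      have "det (label_mat entry (b # rs) (Some e # map Some T)) = 0"
        by (rule det_label_mat_equal_cols[of _ _ 0 "Suc i"]) (use i len in auto)
      thus ?thesis by simp
    next
      case False
      hence "e # T \<in> col_lists (Suc (length rs))" using T e by (auto simp: col_lists_def)
      hence "int_minor (b # rs) (e # T) = 0" using dep by (simp add: dependent_def)
      thus ?thesis by (simp add: int_minor_def)
    qed
  qed
  finally show ?thesis .
qed

lemma mixed_minor_expand:
  assumes "length T = length rs"
  shows "mixed_minor (a # rs) T = y a * int_minor rs T +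
     (\<Sum>j<length rs. of_int (Q a (T ! j)) * ((-1) ^ Suc j * mixed_minor rs (remove_nth j T)))"
proof -
  have len: "length (None # map Some T) = Suc (length rs)" using assms by simp
  have "mixed_minor (a # rs) T = (\<Sum>j<Suc (length rs). entry a ((None # map Some T) ! j) *
          ((-1) ^ j * det (label_mat entry rs (remove_nth j (None # map Some T)))))"
    unfolding mixed_minor_def laplace_label_mat_row[OF len] len ..
  also have "\<dots> = y a * int_minor rs T +
     (\<Sum>j<length rs. of_int (Q a (T ! j)) * ((-1) ^ Suc j * mixed_minor rs (remove_nth j T)))"
    unfolding sum.lessThan_Suc_shift
    using assms by (simp add: entry_def int_minor_def mixed_minor_def remove_nth_map)
  finally show ?thesis .
qed

lemma expansion_tail_bound:
  assumes T: "T \<in> col_lists (length rs)" and bnd: "mixed_bounded rs B" and a: "a \<le> m"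
  shows "\<bar>\<Sum>j<length rs. of_int (Q a (T ! j)) * ((-1) ^ Suc j * mixed_minor rs (remove_nth j T))\<bar>
      \<le> real (length rs) * l a * B"
proof -
  have "\<bar>\<Sum>j<length rs. of_int (Q a (T ! j)) * ((-1) ^ Suc j * mixed_minor rs (remove_nth j T))\<bar>
     \<le> (\<Sum>j<length rs. \<bar>real_of_int (Q a (T ! j))\<bar> * \<bar>mixed_minor rs (remove_nth j T)\<bar>)"
    by (rule order.trans[OF sum_abs]) (simp add: abs_mult)
  also have "\<dots> \<le> (\<Sum>j<length rs. l a * B)"
  proof (rule sum_mono)
    fix j assume "j \<in> {..<length rs}"
    hence "remove_nth j T \<in> col_lists (length rs - 1)" using col_lists_remove_nth[OF T] by auto
    hence "\<bar>mixed_minor rs (remove_nth j T)\<bar> \<le> B" using bnd by (simp add: mixed_bounded_def)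
    thus "\<bar>real_of_int (Q a (T ! j))\<bar> * \<bar>mixed_minor rs (remove_nth j T)\<bar> \<le> l a * B"
      by (rule mult_mono[OF coeff_le[OF a]]) (use l_nonneg[OF a] in auto)
  qed
  finally show ?thesis by simp
qed

lemma dependent_row_bound:
  assumes "dependent rs b" "set (b # rs) \<subseteq> {..m}" "mixed_bounded rs B" "T \<in> col_lists (length rs)"
  shows "\<bar>y b\<bar> * \<bar>int_minor rs T\<bar> \<le> real (length rs) * l b * B"
proof -
  have lenT: "length T = length rs" using assms(4) by (simp add: col_lists_def)
  have "0 = mixed_minor (b # rs) T" using mixed_minor_dependent[OF assms(1,2,4)] by simp
  hence "y b * int_minor rs T = - (\<Sum>j<length rs.
      of_int (Q b (T ! j)) * ((-1) ^ Suc j * mixed_minor rs (remove_nth j T)))"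
    unfolding mixed_minor_expand[OF lenT] by linarith
  hence "\<bar>y b\<bar> * \<bar>int_minor rs T\<bar> = \<bar>\<Sum>j<length rs.
      of_int (Q b (T ! j)) * ((-1) ^ Suc j * mixed_minor rs (remove_nth j T))\<bar>"
    by (simp add: abs_mult[symmetric])
  also have "\<dots> \<le> real (length rs) * l b * B"
    by (rule expansion_tail_bound[OF assms(4,3)]) (use assms(2) in auto)
  finally show ?thesis .
qed

lemma mixed_bounded_Cons:
  assumes "mixed_bounded rs B" "\<And>T. T \<in> col_lists (length rs) \<Longrightarrow> \<bar>int_minor rs T\<bar> \<le> M" "a \<le> m"
  shows "mixed_bounded (a # rs) (\<bar>y a\<bar> * M + real (length rs) * l a * B)"
  unfolding mixed_bounded_def
proof
  fix S assume "S \<in> col_lists (length (a # rs) - 1)"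
  hence S: "S \<in> col_lists (length rs)" by simp
  have lenS: "length S = length rs" using S by (simp add: col_lists_def)
  have "\<bar>mixed_minor (a # rs) S\<bar> \<le> \<bar>y a * int_minor rs S\<bar> + \<bar>\<Sum>j<length rs.
      of_int (Q a (S ! j)) * ((-1) ^ Suc j * mixed_minor rs (remove_nth j S))\<bar>"
    unfolding mixed_minor_expand[OF lenS] by (rule abs_triangle_ineq)
  also have "\<dots> \<le> \<bar>y a\<bar> * M + real (length rs) * l a * B"
    by (rule add_mono)
      (use assms(2)[OF S] expansion_tail_bound[OF S assms(1,3)]
        in \<open>auto simp: abs_mult intro: mult_left_mono\<close>)
  finally show "\<bar>mixed_minor (a # rs) S\<bar> \<le> \<bar>y a\<bar> * M + real (length rs) * l a * B" .
qed

lemma mixed_bounded_mono: "mixed_bounded rs B \<Longrightarrow> B \<le> B' \<Longrightarrow> mixed_bounded rs B'"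
  unfolding mixed_bounded_def by force

text \<open>The factor by which the bound on the mixed minors grows when row k is adjoined.\<close>

definition step_factor :: "nat \<Rightarrow> real" where
  "step_factor k = real (card E) * (\<bar>y k\<bar> * l (Suc k) / \<bar>y (Suc k)\<bar> + l k)"

lemma step_factor_nonneg: "k < m \<Longrightarrow> 0 \<le> step_factor k"
  unfolding step_factor_def using l_nonneg[of k] l_nonneg[of "Suc k"] by simp

lemma prod_step_factor_nonneg: "K \<subseteq> {..<m} \<Longrightarrow> 0 \<le> prod step_factor K"
  by (rule prod_nonneg) (use step_factor_nonneg in auto)

text \<open>Invariant of the elimination after rows m, m-1, ..., j have been treated: the
  selected rows rs lie in {j..m}, have a nonzero integer minor of full size, row j
  depends on them, and their mixed minors are bounded by |y m| times the product of
  the step factors of the rows adjoined so far.\<close>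

definition elim_state :: "nat \<Rightarrow> nat list \<Rightarrow> bool" where
  "elim_state j rs \<longleftrightarrow> set rs \<subseteq> {j..m} \<and> (\<exists>T\<in>col_lists (length rs). int_minor rs T \<noteq> 0)
     \<and> dependent rs j
     \<and> (\<exists>K \<subseteq> {j..<m}. card K + 1 = length rs \<and> mixed_bounded rs (\<bar>y m\<bar> * prod step_factor K))"

lemma elim_state_start: "elim_state m [m]"
proof -
  have "\<exists>e\<in>E. Q m e \<noteq> 0"
  proof (rule ccontr)
    assume "\<not> (\<exists>e\<in>E. Q m e \<noteq> 0)"
    hence "y m = 0" using y_eq[of m] by simp
    thus False using y_nonzero[of m] by simp
  qed
  then obtain e where e: "e \<in> E" "Q m e \<noteq> 0" by blast
  have "int_minor [m] [e] = of_int (Q m e)"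
    unfolding int_minor_def using laplace_label_mat_row[of "[Some e]" "[]" entry m]
    by (simp add: entry_def)
  hence "\<exists>T\<in>col_lists (length [m]). int_minor [m] T \<noteq> 0"
    using e by (intro bexI[of _ "[e]"]) (auto simp: col_lists_def)
  moreover have "mixed_bounded [m] (\<bar>y m\<bar> * prod step_factor {})"
    unfolding mixed_bounded_def col_lists_def
    using mixed_minor_expand[of "[]" "[]" m] by (simp add: int_minor_def)
  moreover have "dependent [m] m" by (rule dependent_member) simp
  ultimately show ?thesis
    unfolding elim_state_def by (intro conjI exI[of _ "{}"]) auto
qed

lemma elim_state_adjoin:
  assumes st: "elim_state (Suc k) rs" and k: "k < m"
    and T: "T \<in> col_lists (Suc (length rs))" and nz: "int_minor (k # rs) T \<noteq> 0"
  shows "elim_state k (k # rs)"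
proof -
  from st obtain K where rows: "set rs \<subseteq> {Suc k..m}" and dep: "dependent rs (Suc k)"
    and minor: "\<exists>T\<in>col_lists (length rs). int_minor rs T \<noteq> 0"
    and K: "K \<subseteq> {Suc k..<m}" "card K + 1 = length rs"
    and bnd: "mixed_bounded rs (\<bar>y m\<bar> * prod step_factor K)"
    unfolding elim_state_def by blast
  define B where "B = \<bar>y m\<bar> * prod step_factor K"
  have B_nonneg: "0 \<le> B"
    unfolding B_def using K(1) by (intro mult_nonneg_nonneg abs_ge_zero prod_step_factor_nonneg) auto
  have len_rs: "length rs \<le> card E" using minor col_lists_le_card by blast
  have y_Suc: "0 < \<bar>y (Suc k)\<bar>" using y_nonzero[of "Suc k"] k by auto
  have minor_bound: "\<bar>int_minor rs T'\<bar> \<le> real (length rs) * l (Suc k) * B / \<bar>y (Suc k)\<bar>"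
    if T': "T' \<in> col_lists (length rs)" for T'
  proof -
    have "\<bar>y (Suc k)\<bar> * \<bar>int_minor rs T'\<bar> \<le> real (length rs) * l (Suc k) * B"
      by (rule dependent_row_bound[OF dep _ _ T']) (use rows k bnd in \<open>auto simp: B_def\<close>)
    thus ?thesis using y_Suc by (simp add: field_simps)
  qed
  have "mixed_bounded (k # rs)
      (\<bar>y k\<bar> * (real (length rs) * l (Suc k) * B / \<bar>y (Suc k)\<bar>) + real (length rs) * l k * B)"
    by (rule mixed_bounded_Cons[OF _ minor_bound]) (use bnd k in \<open>auto simp: B_def\<close>)
  moreover have "\<bar>y k\<bar> * (real (length rs) * l (Suc k) * B / \<bar>y (Suc k)\<bar>) + real (length rs) * l k * B
      \<le> step_factor k * B"
  proof -
    have "\<bar>y k\<bar> * (real (length rs) * l (Suc k) * B / \<bar>y (Suc k)\<bar>) + real (length rs) * l k * B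
        = real (length rs) * (\<bar>y k\<bar> * l (Suc k) / \<bar>y (Suc k)\<bar> + l k) * B"
      by (simp add: field_simps)
    also have "\<dots> \<le> step_factor k * B"
      unfolding step_factor_def
      by (intro mult_right_mono) (use len_rs B_nonneg l_nonneg[of k] l_nonneg[of "Suc k"] k in auto)
    finally show ?thesis .
  qed
  moreover have "k \<notin> K" "finite K" using K(1) finite_subset by auto
  moreover have "step_factor k * B = \<bar>y m\<bar> * prod step_factor (insert k K)"
    using \<open>k \<notin> K\<close> \<open>finite K\<close> unfolding B_def by simp
  ultimately have "mixed_bounded (k # rs) (\<bar>y m\<bar> * prod step_factor (insert k K))"
    using mixed_bounded_mono by metis
  moreover have "card (insert k K) + 1 = length (k # rs)" using K(2) \<open>k \<notin> K\<close> \<open>finite K\<close> by simp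
  moreover have "insert k K \<subseteq> {k..<m}" using K(1) k by auto
  moreover have "set (k # rs) \<subseteq> {k..m}" using rows k by auto
  moreover have "dependent (k # rs) k" by (rule dependent_member) simp
  ultimately show ?thesis
    unfolding elim_state_def using T nz by (intro conjI bexI[of _ T] exI[of _ "insert k K"]) auto
qed

lemma elim_state_skip:
  assumes "elim_state (Suc k) rs" "dependent rs k"
  shows "elim_state k rs"
proof -
  from assms(1) obtain K where "set rs \<subseteq> {Suc k..m}" "K \<subseteq> {Suc k..<m}"
    "\<exists>T\<in>col_lists (length rs). int_minor rs T \<noteq> 0"
    "card K + 1 = length rs" "mixed_bounded rs (\<bar>y m\<bar> * prod step_factor K)"
    unfolding elim_state_def by blast
  moreover have "{Suc k..m} \<subseteq> {k..m}" "{Suc k..<m} \<subseteq> {k..<m}" by auto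
  ultimately show ?thesis
    unfolding elim_state_def using assms(2) by (meson order_trans)
qed

lemma elim_state_exists: "j \<le> m \<Longrightarrow> \<exists>rs. elim_state j rs"
proof (induction j rule: inc_induct)
  case base
  show ?case using elim_state_start by blast
next
  case (step k)
  then obtain rs where st: "elim_state (Suc k) rs" by blast
  show ?case
  proof (cases "\<exists>T\<in>col_lists (Suc (length rs)). int_minor (k # rs) T \<noteq> 0")
    case True
    thus ?thesis using elim_state_adjoin[OF st \<open>k < m\<close>] by blast
  next
    case False
    hence "dependent rs k" unfolding dependent_def by blast
    thus ?thesis using elim_state_skip[OF st] by blast
  qed
qed

theorem elimination_bound:
  "\<exists>K \<subseteq> {..<m}. card K < card E \<and>
     \<bar>y 0\<bar> \<le> real (card E) * l 0 * (\<bar>y m\<bar> * prod step_factor K)"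
proof -
  obtain rs where "elim_state 0 rs" using elim_state_exists by blast
  then obtain T K where rows: "set rs \<subseteq> {0..m}" and dep: "dependent rs 0"
    and T: "T \<in> col_lists (length rs)" "int_minor rs T \<noteq> 0"
    and K: "K \<subseteq> {0..<m}" "card K + 1 = length rs"
    and bnd: "mixed_bounded rs (\<bar>y m\<bar> * prod step_factor K)"
    unfolding elim_state_def by blast
  define B where "B = \<bar>y m\<bar> * prod step_factor K"
  have B_nonneg: "0 \<le> B"
    unfolding B_def using K(1) by (intro mult_nonneg_nonneg abs_ge_zero prod_step_factor_nonneg) auto
  have len: "length rs \<le> card E" using col_lists_le_card[OF T(1)] .
  have "\<bar>y 0\<bar> \<le> \<bar>y 0\<bar> * \<bar>int_minor rs T\<bar>"
    using int_minor_ge_1[OF T(2)] by (simp add: mult_le_cancel_left1)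
  also have "\<dots> \<le> real (length rs) * l 0 * B"
    by (rule dependent_row_bound[OF dep _ _ T(1)]) (use rows bnd in \<open>auto simp: B_def\<close>)
  also have "\<dots> \<le> real (card E) * l 0 * B"
    by (intro mult_right_mono) (use len B_nonneg l_nonneg[of 0] in auto)
  finally show ?thesis using K len unfolding B_def by (intro exI[of _ K] conjI) auto
qed

end


subsection \<open>Counting monomials\<close>

definition monomials :: "nat \<Rightarrow> nat \<Rightarrow> (nat \<Rightarrow> nat) set" where
  "monomials t N = {e. (\<forall>i\<ge>t. e i = 0) \<and> (\<Sum>i<t. e i) \<le> N}"

lemma sum_choose_shift: "(\<Sum>i<Suc N. (i + t) choose t) = (N + Suc t) choose Suc t"
proof (induction N)
  case (Suc N)
  have "(\<Sum>i<Suc (Suc N). (i + t) choose t) = ((N + Suc t) choose Suc t) + ((N + Suc t) choose t)"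
    unfolding sum.lessThan_Suc[of _ "Suc N"] Suc.IH by simp
  also have "\<dots> = Suc (N + Suc t) choose Suc t"
    by (subst binomial_Suc_Suc) (rule add.commute)
  finally show ?case by simp
qed simp

lemma monomials_Suc_subset:
  "monomials (Suc t) N \<subseteq> (\<lambda>(j, e). e(t := j)) ` (SIGMA j:{..N}. monomials t (N - j))"
proof
  fix e assume e: "e \<in> monomials (Suc t) N"
  define e' where "e' = e(t := 0)"
  have "(\<Sum>i<t. e' i) = (\<Sum>i<t. e i)" unfolding e'_def by (rule sum.cong) auto
  moreover have tot: "(\<Sum>i<t. e i) + e t \<le> N" using e unfolding monomials_def by simp
  moreover have "\<forall>i\<ge>t. e' i = 0" using e unfolding e'_def monomials_def by (auto simp: Suc_le_eq)
  ultimately have "(e t, e') \<in> (SIGMA j:{..N}. monomials t (N - j))"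
    unfolding monomials_def by auto
  moreover have "e = e'(t := e t)" unfolding e'_def by simp
  ultimately show "e \<in> (\<lambda>(j, e). e(t := j)) ` (SIGMA j:{..N}. monomials t (N - j))"
    by (intro rev_image_eqI[of "(e t, e')"]) simp_all
qed

lemma monomials_finite_card:
  "finite (monomials t N) \<and> card (monomials t N) \<le> (N + t) choose t"
proof (induction t arbitrary: N)
  case 0
  have "monomials 0 N = {\<lambda>_. 0}" unfolding monomials_def by (auto simp: fun_eq_iff)
  thus ?case by simp
next
  case (Suc t)
  define A where "A = (SIGMA j:{..N}. monomials t (N - j))"
  have finA: "finite A" unfolding A_def using Suc.IH by auto
  have sub: "monomials (Suc t) N \<subseteq> (\<lambda>(j, e). e(t := j)) ` A"
    unfolding A_def by (rule monomials_Suc_subset)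
  have "card (monomials (Suc t) N) \<le> card A"
    using card_mono[OF _ sub] card_image_le[OF finA] finA by (meson finite_imageI le_trans)
  also have "card A = (\<Sum>j\<le>N. card (monomials t (N - j)))"
    unfolding A_def by (rule card_SigmaI) (use Suc.IH in auto)
  also have "\<dots> \<le> (\<Sum>j\<le>N. (N - j + t) choose t)"
  proof (rule sum_mono)
    fix j assume "j \<in> {..N}"
    thus "card (monomials t (N - j)) \<le> (N - j + t) choose t" using Suc.IH[of "N - j"] by simp
  qed
  also have "\<dots> = (\<Sum>j<Suc N. (j + t) choose t)"
    using sum.nat_diff_reindex[of "\<lambda>i. (i + t) choose t" "Suc N"]
    by (simp add: lessThan_Suc_atMost)
  also have "\<dots> = (N + Suc t) choose Suc t" by (rule sum_choose_shift)
  finally show ?case using finite_subset[OF sub finite_imageI[OF finA]] by simp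
qed

lemma card_monomials_le: "real (card (monomials t N)) \<le> real (N + t) ^ t / fact t"
proof -
  have "card (monomials t N) * fact t \<le> ((N + t) choose t) * fact t"
    using monomials_finite_card[of t N] by simp
  also have "\<dots> \<le> (N + t) ^ t" by (rule binomial_fact_pow)
  finally have "real (card (monomials t N) * fact t) \<le> real ((N + t) ^ t)" by (simp only: of_nat_le_iff)
  hence "real (card (monomials t N)) * fact t \<le> real (N + t) ^ t"
    by (simp only: of_nat_mult of_nat_fact of_nat_power)
  thus ?thesis by (simp add: pos_le_divide_eq)
qed


lemma powr_increment_le:
  fixes x p :: real
  assumes "0 \<le> x" "1 \<le> p"
  shows "(x + 1) powr p - x powr p \<le> p * (x + 1) powr (p - 1)"
proof (cases "x = 0")
  case True
  thus ?thesis using assms by simp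
next
  case False
  hence x: "0 < x" using assms by simp
  have "\<And>z. x \<le> z \<Longrightarrow> z \<le> x + 1 \<Longrightarrow> ((\<lambda>z. z powr p) has_real_derivative p * z powr (p - 1)) (at z)"
    using x by (intro has_real_derivative_powr) auto
  then obtain z where z: "x < z" "z < x + 1" "(x + 1) powr p - x powr p = (x + 1 - x) * (p * z powr (p - 1))"
    using MVT2[of x "x + 1" "\<lambda>z. z powr p" "\<lambda>z. p * z powr (p - 1)"] by auto
  have "z powr (p - 1) \<le> (x + 1) powr (p - 1)"
    by (rule powr_mono2) (use z x assms in auto)
  hence "p * z powr (p - 1) \<le> p * (x + 1) powr (p - 1)"
    by (rule mult_left_mono) (use assms in linarith)
  thus ?thesis using z(3) by simp
qed

text \<open>The running maximum max_(j \<le> m) |x j| turns bounds that hold for each n into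
  bounds that hold uniformly for all indices below m.\<close>

definition running_max :: "(nat \<Rightarrow> real) \<Rightarrow> nat \<Rightarrow> real" where
  "running_max x m = Max ((\<lambda>j. \<bar>x j\<bar>) ` {..m})"

lemma running_max_ge: "j \<le> m \<Longrightarrow> \<bar>x j\<bar> \<le> running_max x m"
  unfolding running_max_def by (rule Max_ge) auto

lemma running_max_nonneg: "0 \<le> running_max x m"
  using running_max_ge[of 0 m x] by simp

lemma running_max_le: "(\<And>j. j \<le> m \<Longrightarrow> \<bar>x j\<bar> \<le> B) \<Longrightarrow> running_max x m \<le> B"
  unfolding running_max_def by (subst Max_le_iff) auto

lemma running_max_small:
  fixes x w :: "nat \<Rightarrow> real"
  assumes x: "(\<lambda>n. x n / w n) \<longlonglongrightarrow> 0" and w: "mono w" "filterlim w at_top sequentially"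
  shows "(\<lambda>m. running_max x m / w m) \<longlonglongrightarrow> 0"
proof (rule LIMSEQ_I)
  fix r :: real assume r: "0 < r"
  obtain N1 where N1: "\<And>n. n \<ge> N1 \<Longrightarrow> \<bar>x n / w n\<bar> < r / 2"
    using LIMSEQ_D[OF x, of "r / 2"] r by auto
  obtain N2 where N2: "\<And>n. n \<ge> N2 \<Longrightarrow> 1 \<le> w n"
    using w(2) unfolding filterlim_at_top eventually_sequentially by blast
  define N where "N = max N1 N2"
  define C where "C = running_max x N"
  obtain N3 where N3: "\<And>n. n \<ge> N3 \<Longrightarrow> 2 * C / r + 1 \<le> w n"
    using w(2) unfolding filterlim_at_top eventually_sequentially by blast
  show "\<exists>no. \<forall>n\<ge>no. norm (running_max x n / w n - 0) < r"
  proof (intro exI allI impI)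
    fix m assume m: "max N N3 \<le> m"
    have wm1: "1 \<le> w m" using N2[of m] m unfolding N_def by simp
    have C_less: "C < r / 2 * w m"
    proof -
      have "C + r / 2 = r / 2 * (2 * C / r + 1)" using r by (simp add: algebra_simps)
      also have "\<dots> \<le> r / 2 * w m" using N3[of m] m r by simp
      finally show ?thesis using r by simp
    qed
    have "running_max x m \<le> r / 2 * w m"
    proof (rule running_max_le)
      fix j assume j: "j \<le> m"
      show "\<bar>x j\<bar> \<le> r / 2 * w m"
      proof (cases "j \<le> N")
        case True
        thus ?thesis using running_max_ge[OF True, of x] C_less unfolding C_def by simp
      next
        case False
        hence wj: "1 \<le> w j" "w j \<le> w m" using N2[of j] j w(1) unfolding N_def mono_def by auto
        have "\<bar>x j\<bar> / w j < r / 2" using N1[of j] False wj unfolding N_def by (simp add: abs_divide)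
        hence "\<bar>x j\<bar> < r / 2 * w j" using wj by (simp add: divide_less_eq)
        also have "\<dots> \<le> r / 2 * w m" using wj r by simp
        finally show ?thesis by simp
      qed
    qed
    hence "running_max x m / w m \<le> r / 2" using wm1 by (simp add: divide_le_eq)
    moreover have "0 \<le> running_max x m / w m" using running_max_nonneg wm1 by simp
    ultimately show "norm (running_max x m / w m - 0) < r" using r by (simp only: real_norm_def diff_zero)
  qed
qed

lemma real_powr_at_top: "0 < s \<Longrightarrow> filterlim (\<lambda>m::nat. real m powr s) at_top sequentially"
proof -
  assume s: "0 < s"
  have "(\<lambda>m::nat. real m powr (- s)) \<longlonglongrightarrow> 0"
    by (rule tendsto_neg_powr) (use s filterlim_real_sequentially in auto)
  hence "filterlim (\<lambda>m::nat. inverse (real m powr (- s))) at_top sequentially"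
    by (rule filterlim_inverse_at_top) (auto simp: eventually_sequentially intro: exI[of _ 1])
  thus ?thesis by (simp add: powr_minus)
qed

lemma tendsto_divide_at_top:
  "(f \<longlonglongrightarrow> (c::real)) \<Longrightarrow> filterlim g at_top sequentially \<Longrightarrow> (\<lambda>m. f m / g m) \<longlonglongrightarrow> 0"
  by (rule tendsto_divide_0) (auto intro: filterlim_at_top_imp_at_infinity)

lemma mono_real: "mono (\<lambda>m::nat. real m)"
  unfolding mono_def by simp

lemma mono_real_powr: "0 \<le> s \<Longrightarrow> mono (\<lambda>m::nat. real m powr s)"
  unfolding mono_def by (intro allI impI powr_mono2) auto

lemma LIMSEQ_transform_ge_1:
  "X \<longlonglongrightarrow> L \<Longrightarrow> (\<And>m. 1 \<le> m \<Longrightarrow> X m = Y m) \<Longrightarrow> Y \<longlonglongrightarrow> L"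
  by (rule Lim_transform_eventually) (auto simp: eventually_sequentially)


subsection \<open>The sequence of polynomials of the theorem\<close>

locale small_values =
  fixes t :: nat and \<theta> :: "nat \<Rightarrow> real" and \<beta> \<delta> \<kappa> lam \<alpha> \<gamma> :: real
    and P :: "nat \<Rightarrow> mpoly_int" and f g h1 h2 :: "nat \<Rightarrow> real"
  assumes t_pos: "t \<ge> 1"
    and \<beta>_pos: "\<beta> > 0" and \<delta>_pos: "\<delta> > 0" and \<kappa>_pos: "\<kappa> > 0" and lam_pos: "lam > 0"
    and \<kappa>_le: "\<kappa> \<le> 1 / real t"
    and poly: "\<And>n. is_mpoly t (P n)"
    and f_small: "f \<in> o(\<lambda>n. real n powr \<kappa>)"
    and deg: "\<And>n. total_deg_le t (P n) (\<delta> * real n powr \<kappa> + f n)"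
    and g_small: "g \<in> o(\<lambda>n. real n)"
    and len: "\<And>n. mpoly_length (P n) \<le> exp (\<beta> * real n + g n)"
    and h1: "h1 \<longlonglongrightarrow> 0" and h2: "h2 \<longlonglongrightarrow> 0"
    and lower: "\<And>n. exp (- lam * real n powr (1 + real t * \<kappa>) - (\<alpha> + h1 n) * real n)
                  \<le> \<bar>mpoly_eval t (P n) \<theta>\<bar>"
    and upper: "\<And>n. \<bar>mpoly_eval t (P n) \<theta>\<bar>
                  \<le> exp (- lam * real n powr (1 + real t * \<kappa>) - (\<gamma> + h2 n) * real n)"
begin

definition \<sigma> :: real where "\<sigma> = real t * \<kappa>"

definition pval :: "nat \<Rightarrow> real" where "pval n = mpoly_eval t (P n) \<theta>"

text \<open>Uniform bounds for the indices n \<le> m: all P_n with n \<le> m have degree at most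
  deg_bound m and length at most len_bound m, so they are supported on mons m, a set of
  at most mons_bound m monomials.\<close>

definition deg_bound :: "nat \<Rightarrow> real" where
  "deg_bound m = \<delta> * real m powr \<kappa> + running_max f m"

definition mons :: "nat \<Rightarrow> (nat \<Rightarrow> nat) set" where
  "mons m = monomials t (nat \<lfloor>deg_bound m\<rfloor>)"

definition mons_bound :: "nat \<Rightarrow> real" where
  "mons_bound m = (deg_bound m + real t) ^ t / fact t"

definition len_bound :: "nat \<Rightarrow> real" where
  "len_bound m = exp (\<beta> * real m + running_max g m)"

text \<open>Exponent bounding the ratios |pval k / pval (k+1)| for k < m.\<close>

definition ratio_exponent :: "nat \<Rightarrow> real" where
  "ratio_exponent m = lam * (1 + \<sigma>) * real m powr \<sigma> + (\<alpha> - \<gamma>) * real m + \<bar>\<alpha>\<bar>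
     + running_max (\<lambda>j. h1 j * real j) m + running_max (\<lambda>j. h2 j * real j) m"

text \<open>Bound for the step factors of the elimination, and the lower order terms that
  appear after taking logarithms.\<close>

definition factor_bound :: "nat \<Rightarrow> real" where
  "factor_bound m = mons_bound m * (2 * len_bound m * exp (ratio_exponent m))"

definition inner_error :: "nat \<Rightarrow> real" where
  "inner_error m = ln (mons_bound m) + ln 2 + running_max g m + \<bar>\<alpha>\<bar>
     + running_max (\<lambda>j. h1 j * real j) m + running_max (\<lambda>j. h2 j * real j) m"

definition outer_error :: "nat \<Rightarrow> real" where
  "outer_error m = ln (mons_bound m) + ln (mpoly_length (P 0)) - (\<gamma> + h2 m) * real m"

lemma \<sigma>_pos: "0 < \<sigma>"
  unfolding \<sigma>_def using t_pos \<kappa>_pos by simp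

lemma \<sigma>_le_1: "\<sigma> \<le> 1"
proof -
  have "real t * \<kappa> \<le> real t * (1 / real t)" by (rule mult_left_mono) (use \<kappa>_le in auto)
  thus ?thesis using t_pos unfolding \<sigma>_def by simp
qed

lemma pval_lower: "exp (- lam * real n powr (1 + \<sigma>) - (\<alpha> + h1 n) * real n) \<le> \<bar>pval n\<bar>"
  using lower unfolding pval_def \<sigma>_def .

lemma pval_upper: "\<bar>pval n\<bar> \<le> exp (- lam * real n powr (1 + \<sigma>) - (\<gamma> + h2 n) * real n)"
  using upper unfolding pval_def \<sigma>_def .

lemma pval_nonzero: "pval n \<noteq> 0"
  using pval_lower[of n] by (metis abs_zero exp_gt_zero not_less)

text \<open>At n = 0 the lower bound reads |P_0(theta)| \<ge> 1; this is the lower bound for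
  |y_0| that the elimination estimate is compared with.\<close>

lemma pval_0_ge_1: "1 \<le> \<bar>pval 0\<bar>"
  using pval_lower[of 0] by simp

text \<open>Comparing the lower and the upper bound for large n.\<close>

lemma \<gamma>_le_\<alpha>: "\<gamma> \<le> \<alpha>"
proof -
  have "(\<lambda>n. \<alpha> + h1 n - h2 n) \<longlonglongrightarrow> \<alpha> + 0 - 0"
    by (intro tendsto_diff tendsto_add tendsto_const h1 h2)
  moreover have "\<gamma> \<le> \<alpha> + h1 n - h2 n" if n: "1 \<le> n" for n
  proof -
    have "- lam * real n powr (1 + \<sigma>) - (\<alpha> + h1 n) * real n
        \<le> - lam * real n powr (1 + \<sigma>) - (\<gamma> + h2 n) * real n"
      using order.trans[OF pval_lower pval_upper, of n] by simp
    hence "(\<gamma> + h2 n) * real n \<le> (\<alpha> + h1 n) * real n" by linarith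
    thus ?thesis using n by (simp add: mult_le_cancel_right)
  qed
  ultimately show ?thesis using LIMSEQ_le_const by fastforce
qed

lemma deg_bound_nonneg: "0 \<le> deg_bound m"
  unfolding deg_bound_def using \<delta>_pos running_max_nonneg[of f m] by simp

text \<open>The degree bound is uniform in k \<le> m because deg_bound uses the running maximum
  of the error term f.\<close>

lemma support_mons:
  assumes "k \<le> m"
  shows "msupp (P k) \<subseteq> mons m"
proof
  fix e assume e: "e \<in> msupp (P k)"
  have "real (\<Sum>i<t. e i) \<le> \<delta> * real k powr \<kappa> + f k"
    using deg[of k] e unfolding total_deg_le_def by blast
  also have "\<dots> \<le> deg_bound m"
    unfolding deg_bound_def
  proof (rule add_mono)
    show "\<delta> * real k powr \<kappa> \<le> \<delta> * real m powr \<kappa>"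
      by (rule mult_left_mono[OF powr_mono2]) (use \<delta>_pos \<kappa>_pos assms in auto)
    show "f k \<le> running_max f m" using running_max_ge[OF assms, of f] by linarith
  qed
  finally have "(\<Sum>i<t. e i) \<le> nat \<lfloor>deg_bound m\<rfloor>" by (rule le_nat_floor)
  moreover have "\<forall>i\<ge>t. e i = 0" using poly[of k] e unfolding is_mpoly_def by blast
  ultimately show "e \<in> mons m" unfolding mons_def monomials_def by blast
qed

lemma finite_mons: "finite (mons m)"
  unfolding mons_def using monomials_finite_card by blast

lemma card_mons_ge_1: "1 \<le> card (mons m)"
proof -
  have "(\<lambda>_. 0) \<in> mons m" unfolding mons_def monomials_def by simp
  thus ?thesis using finite_mons card_0_eq[of "mons m"] by fastforce
qed

lemma card_mons_le: "real (card (mons m)) \<le> mons_bound m"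
proof -
  have "real (card (mons m)) \<le> real (nat \<lfloor>deg_bound m\<rfloor> + t) ^ t / fact t"
    unfolding mons_def by (rule card_monomials_le)
  also have "\<dots> \<le> mons_bound m"
    unfolding mons_bound_def
    by (intro divide_right_mono power_mono)
      (use of_nat_floor[OF deg_bound_nonneg[of m]] in auto)
  finally show ?thesis .
qed

lemma mons_bound_ge_1: "1 \<le> mons_bound m"
  using card_mons_ge_1[of m] card_mons_le[of m] by linarith

lemma linear_forms_mons:
  "linear_forms pval P (mons m) (\<lambda>e. \<Prod>i<t. \<theta> i ^ e i) (\<lambda>k. mpoly_length (P k)) m"
proof
  show "finite (mons m)" by (rule finite_mons)
  show "pval k = (\<Sum>e\<in>mons m. (\<Prod>i<t. \<theta> i ^ e i) * of_int (P k e))" if "k \<le> m" for k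
  proof -
    have "pval k = (\<Sum>e\<in>msupp (P k). (\<Prod>i<t. \<theta> i ^ e i) * of_int (P k e))"
      unfolding pval_def mpoly_eval_def by (simp add: mult.commute)
    also have "\<dots> = (\<Sum>e\<in>mons m. (\<Prod>i<t. \<theta> i ^ e i) * of_int (P k e))"
      by (rule sum.mono_neutral_left[OF finite_mons support_mons[OF that]]) (auto simp: msupp_def)
    finally show ?thesis .
  qed
  show "\<bar>real_of_int (P k e)\<bar> \<le> mpoly_length (P k)" for k e
  proof (cases "e \<in> msupp (P k)")
    case True
    have fin: "finite (msupp (P k))" using poly[of k] unfolding is_mpoly_def by blast
    have "real_of_int \<bar>P k e\<bar> \<le> mpoly_length (P k)"
      unfolding mpoly_length_def by (rule member_le_sum[OF True _ fin]) simp
    thus ?thesis by simp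
  next
    case False
    thus ?thesis unfolding msupp_def mpoly_length_def by (simp add: sum_nonneg)
  qed
  show "pval k \<noteq> 0" for k by (rule pval_nonzero)
qed

lemma length_le_len_bound:
  assumes "j \<le> m"
  shows "mpoly_length (P j) \<le> len_bound m"
proof -
  have "mpoly_length (P j) \<le> exp (\<beta> * real j + g j)" by (rule len)
  also have "\<dots> \<le> len_bound m"
    unfolding len_bound_def exp_le_cancel_iff
  proof (rule add_mono)
    show "\<beta> * real j \<le> \<beta> * real m" by (rule mult_left_mono) (use assms \<beta>_pos in auto)
    show "g j \<le> running_max g m" using running_max_ge[OF assms, of g] by linarith
  qed
  finally show ?thesis .
qed

lemma len_bound_ge_1: "1 \<le> len_bound m"
  unfolding len_bound_def using \<beta>_pos running_max_nonneg[of g m] by simp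

lemma ratio_exponent_nonneg: "0 \<le> ratio_exponent m"
  unfolding ratio_exponent_def
  using lam_pos \<sigma>_pos \<gamma>_le_\<alpha> running_max_nonneg[of "\<lambda>j. h1 j * real j" m]
    running_max_nonneg[of "\<lambda>j. h2 j * real j" m]
  by (simp add: add_nonneg_nonneg)

text \<open>Consecutive values differ by a factor of at most exp (ratio_exponent m); the
  main term comes from the mean value estimate for n powr (1 + sigma).\<close>

lemma ratio_le:
  assumes k: "k < m"
  shows "\<bar>pval k\<bar> / \<bar>pval (Suc k)\<bar> \<le> exp (ratio_exponent m)"
proof -
  have "\<bar>pval k\<bar> / \<bar>pval (Suc k)\<bar>
      \<le> exp (- lam * real k powr (1 + \<sigma>) - (\<gamma> + h2 k) * real k)
        / exp (- lam * real (Suc k) powr (1 + \<sigma>) - (\<alpha> + h1 (Suc k)) * real (Suc k))"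
    by (rule frac_le) (use pval_upper[of k] pval_lower[of "Suc k"] in auto)
  also have "\<dots> = exp (lam * (real (Suc k) powr (1 + \<sigma>) - real k powr (1 + \<sigma>)) + (\<alpha> - \<gamma>) * real k
      + \<alpha> + h1 (Suc k) * real (Suc k) - h2 k * real k)"
    unfolding exp_diff[symmetric] by (simp add: algebra_simps)
  also have "\<dots> \<le> exp (ratio_exponent m)"
    unfolding exp_le_cancel_iff ratio_exponent_def
  proof -
    have "(real k + 1) powr (1 + \<sigma>) - real k powr (1 + \<sigma>) \<le> (1 + \<sigma>) * (real k + 1) powr \<sigma>"
      using powr_increment_le[of "real k" "1 + \<sigma>"] \<sigma>_pos by simp
    also have "\<dots> \<le> (1 + \<sigma>) * real m powr \<sigma>"
      by (intro mult_left_mono powr_mono2) (use k \<sigma>_pos in auto)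
    finally have "lam * (real (Suc k) powr (1 + \<sigma>) - real k powr (1 + \<sigma>)) \<le> lam * (1 + \<sigma>) * real m powr \<sigma>"
      using lam_pos by (simp add: add.commute mult.assoc mult_left_mono)
    moreover have "(\<alpha> - \<gamma>) * real k \<le> (\<alpha> - \<gamma>) * real m"
      by (rule mult_left_mono) (use \<gamma>_le_\<alpha> k in auto)
    moreover have "h1 (Suc k) * real (Suc k) \<le> running_max (\<lambda>j. h1 j * real j) m"
      using running_max_ge[of "Suc k" m "\<lambda>j. h1 j * real j"] k by simp
    moreover have "- (h2 k * real k) \<le> running_max (\<lambda>j. h2 j * real j) m"
      using running_max_ge[of k m "\<lambda>j. h2 j * real j"] k by simp
    ultimately show "lam * (real (Suc k) powr (1 + \<sigma>) - real k powr (1 + \<sigma>)) + (\<alpha> - \<gamma>) * real k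
        + \<alpha> + h1 (Suc k) * real (Suc k) - h2 k * real k
      \<le> lam * (1 + \<sigma>) * real m powr \<sigma> + (\<alpha> - \<gamma>) * real m + \<bar>\<alpha>\<bar>
        + running_max (\<lambda>j. h1 j * real j) m + running_max (\<lambda>j. h2 j * real j) m"
      by linarith
  qed
  finally show ?thesis .
qed

lemma step_factor_le:
  assumes k: "k < m"
  shows "linear_forms.step_factor pval (mons m) (\<lambda>k. mpoly_length (P k)) k \<le> factor_bound m"
proof -
  interpret L: linear_forms pval P "mons m" "\<lambda>e. \<Prod>i<t. \<theta> i ^ e i" "\<lambda>k. mpoly_length (P k)" m
    by (rule linear_forms_mons)
  have e1: "1 \<le> exp (ratio_exponent m)" using ratio_exponent_nonneg by simp
  have "\<bar>pval k\<bar> * mpoly_length (P (Suc k)) / \<bar>pval (Suc k)\<bar>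
      = \<bar>pval k\<bar> / \<bar>pval (Suc k)\<bar> * mpoly_length (P (Suc k))" by simp
  also have "\<dots> \<le> exp (ratio_exponent m) * len_bound m"
    by (rule mult_mono[OF ratio_le[OF k] length_le_len_bound]) (use k L.l_nonneg in auto)
  finally have "\<bar>pval k\<bar> * mpoly_length (P (Suc k)) / \<bar>pval (Suc k)\<bar> + mpoly_length (P k)
      \<le> exp (ratio_exponent m) * len_bound m + 1 * len_bound m"
    using length_le_len_bound[of k m] k by simp
  also have "\<dots> \<le> 2 * len_bound m * exp (ratio_exponent m)"
    using mult_right_mono[OF e1, of "len_bound m"] len_bound_ge_1[of m] by simp
  finally show ?thesis
    unfolding L.step_factor_def factor_bound_def
    by (rule mult_mono[OF card_mons_le]) (use L.l_nonneg k mons_bound_ge_1[of m] in auto)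
qed

text \<open>The elimination bound at a fixed m, after taking logarithms.\<close>

lemma log_estimate:
  "lam * real m powr (1 + \<sigma>) \<le> ln (mons_bound m) + ln (mpoly_length (P 0)) - (\<gamma> + h2 m) * real m
     + mons_bound m * ln (factor_bound m)"
proof -
  interpret L: linear_forms pval P "mons m" "\<lambda>e. \<Prod>i<t. \<theta> i ^ e i" "\<lambda>k. mpoly_length (P k)" m
    by (rule linear_forms_mons)
  obtain K where K: "K \<subseteq> {..<m}" "card K < card (mons m)"
    and elim: "\<bar>pval 0\<bar> \<le> real (card (mons m)) * mpoly_length (P 0) * (\<bar>pval m\<bar> * prod L.step_factor K)"
    using L.elimination_bound by blast
  define G where "G = factor_bound m"
  have G_ge_1: "1 \<le> G"
  proof -
    have "1 * 1 \<le> len_bound m * exp (ratio_exponent m)"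
      by (rule mult_mono) (use len_bound_ge_1[of m] ratio_exponent_nonneg[of m] in auto)
    hence "1 * 1 \<le> mons_bound m * (2 * len_bound m * exp (ratio_exponent m))"
      by (intro mult_mono) (use mons_bound_ge_1[of m] in auto)
    thus ?thesis unfolding G_def factor_bound_def by simp
  qed
  have "prod L.step_factor K \<le> prod (\<lambda>_. G) K"
    by (rule prod_mono) (use step_factor_le L.step_factor_nonneg K(1) in \<open>auto simp: G_def\<close>)
  hence "\<bar>pval m\<bar> * prod L.step_factor K \<le> \<bar>pval m\<bar> * G ^ card K"
    by (simp add: mult_left_mono)
  hence "real (card (mons m)) * mpoly_length (P 0) * (\<bar>pval m\<bar> * prod L.step_factor K)
      \<le> real (card (mons m)) * mpoly_length (P 0) * (\<bar>pval m\<bar> * G ^ card K)"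
    by (rule mult_left_mono) (use L.l_nonneg[of 0] in simp)
  hence X: "1 \<le> real (card (mons m)) * mpoly_length (P 0) * (\<bar>pval m\<bar> * G ^ card K)"
    using elim pval_0_ge_1 by linarith
  have l0: "0 < mpoly_length (P 0)"
    using X L.l_nonneg[of 0] by (cases "mpoly_length (P 0) = 0") auto
  have "ln (real (card (mons m)) * mpoly_length (P 0) * (\<bar>pval m\<bar> * G ^ card K))
      = ln (real (card (mons m))) + ln (mpoly_length (P 0)) + ln \<bar>pval m\<bar> + real (card K) * ln G"
    using card_mons_ge_1[of m] l0 pval_nonzero[of m] G_ge_1 by (simp add: ln_mult ln_realpow)
  moreover have "0 \<le> ln (real (card (mons m)) * mpoly_length (P 0) * (\<bar>pval m\<bar> * G ^ card K))"
    using X by simp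
  moreover have "ln (real (card (mons m))) \<le> ln (mons_bound m)"
    using card_mons_ge_1[of m] card_mons_le[of m] by simp
  moreover have "ln \<bar>pval m\<bar> \<le> - lam * real m powr (1 + \<sigma>) - (\<gamma> + h2 m) * real m"
  proof -
    have "ln \<bar>pval m\<bar> \<le> ln (exp (- lam * real m powr (1 + \<sigma>) - (\<gamma> + h2 m) * real m))"
      using pval_upper[of m] pval_nonzero[of m] by (subst ln_le_cancel_iff) auto
    thus ?thesis by simp
  qed
  moreover have "real (card K) * ln G \<le> mons_bound m * ln G"
    by (rule mult_right_mono) (use K(2) card_mons_le[of m] G_ge_1 in auto)
  ultimately show ?thesis unfolding G_def by linarith
qed

lemma main_estimate:
  "lam * real m powr (1 + \<sigma>) \<le> mons_bound m *
     (lam * (1 + \<sigma>) * real m powr \<sigma> + (\<alpha> + \<beta> - \<gamma>) * real m + inner_error m) + outer_error m"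
proof -
  have "ln (factor_bound m) = lam * (1 + \<sigma>) * real m powr \<sigma> + (\<alpha> + \<beta> - \<gamma>) * real m + inner_error m"
    unfolding factor_bound_def len_bound_def ratio_exponent_def inner_error_def
    using mons_bound_ge_1[of m] by (simp add: ln_mult algebra_simps)
  thus ?thesis using log_estimate[of m] unfolding outer_error_def by simp
qed


lemma running_max_h_small:
  assumes "h \<longlonglongrightarrow> 0"
  shows "(\<lambda>m. running_max (\<lambda>j. h j * real j) m / real m) \<longlonglongrightarrow> 0"
proof (rule running_max_small[OF _ mono_real filterlim_real_sequentially])
  have "\<forall>\<^sub>F n in sequentially. h n = h n * real n / real n"
    unfolding eventually_sequentially by (intro exI[of _ 1]) auto
  thus "(\<lambda>n. h n * real n / real n) \<longlonglongrightarrow> 0" using tendsto_cong assms by fastforce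
qed

lemma mons_bound_asymp: "(\<lambda>m. mons_bound m / real m powr \<sigma>) \<longlonglongrightarrow> \<delta> ^ t / fact t"
proof -
  have max_f: "(\<lambda>m. running_max f m / real m powr \<kappa>) \<longlonglongrightarrow> 0"
    by (rule running_max_small[OF smalloD_tendsto[OF f_small] mono_real_powr real_powr_at_top])
      (use \<kappa>_pos in auto)
  have "(\<lambda>m. (\<delta> + running_max f m / real m powr \<kappa> + real t / real m powr \<kappa>) ^ t / fact t)
      \<longlonglongrightarrow> (\<delta> + 0 + 0) ^ t / fact t"
    by (intro tendsto_divide tendsto_power tendsto_add tendsto_const max_f
        tendsto_divide_at_top[OF tendsto_const real_powr_at_top]) (use \<kappa>_pos in auto)
  hence "(\<lambda>m. (\<delta> + running_max f m / real m powr \<kappa> + real t / real m powr \<kappa>) ^ t / fact t)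
      \<longlonglongrightarrow> \<delta> ^ t / fact t" by simp
  moreover have "(\<delta> + running_max f m / real m powr \<kappa> + real t / real m powr \<kappa>) ^ t / fact t
      = mons_bound m / real m powr \<sigma>" if m: "1 \<le> m" for m
  proof -
    define q where "q = real m powr \<kappa>"
    have q: "0 < q" unfolding q_def using m by simp
    have "real m powr \<sigma> = q ^ t"
      unfolding q_def \<sigma>_def using m by (simp add: powr_powr mult.commute flip: powr_realpow)
    moreover have "\<delta> + running_max f m / q + real t / q = (deg_bound m + real t) / q"
      unfolding deg_bound_def q_def[symmetric] using q by (simp add: add_divide_distrib)
    ultimately show ?thesis
      unfolding mons_bound_def q_def[symmetric] by (simp add: power_divide)
  qed
  ultimately show ?thesis by (rule LIMSEQ_transform_ge_1)
qed

lemma ln_mons_bound_small: "(\<lambda>m. ln (mons_bound m) / real m) \<longlonglongrightarrow> 0"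
proof -
  have ln_m: "(\<lambda>m. ln (real m) / real m) \<longlonglongrightarrow> 0"
    using filterlim_compose[OF ln_x_over_x_tendsto_0 filterlim_real_sequentially] by simp
  have "(\<lambda>m. ln (mons_bound m / real m powr \<sigma>) / real m + \<sigma> * (ln (real m) / real m)) \<longlonglongrightarrow> 0 + \<sigma> * 0"
    by (intro tendsto_add tendsto_mult tendsto_const ln_m
        tendsto_divide_at_top[OF tendsto_ln[OF mons_bound_asymp] filterlim_real_sequentially])
      (use \<delta>_pos in simp)
  hence "(\<lambda>m. ln (mons_bound m / real m powr \<sigma>) / real m + \<sigma> * (ln (real m) / real m)) \<longlonglongrightarrow> 0"
    by simp
  moreover have "ln (mons_bound m / real m powr \<sigma>) / real m + \<sigma> * (ln (real m) / real m)
      = ln (mons_bound m) / real m" if m: "1 \<le> m" for m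
    using m mons_bound_ge_1[of m] by (simp add: ln_div add_divide_distrib diff_divide_distrib)
  ultimately show ?thesis by (rule LIMSEQ_transform_ge_1)
qed

lemma inner_error_small: "(\<lambda>m. inner_error m / real m) \<longlonglongrightarrow> 0"
proof -
  have max_g: "(\<lambda>m. running_max g m / real m) \<longlonglongrightarrow> 0"
    by (rule running_max_small[OF smalloD_tendsto[OF g_small] mono_real filterlim_real_sequentially])
  have "(\<lambda>m. ln (mons_bound m) / real m + ln 2 / real m + running_max g m / real m + \<bar>\<alpha>\<bar> / real m
      + running_max (\<lambda>j. h1 j * real j) m / real m + running_max (\<lambda>j. h2 j * real j) m / real m)
      \<longlonglongrightarrow> 0 + 0 + 0 + 0 + 0 + 0"
    by (intro tendsto_add ln_mons_bound_small max_g running_max_h_small h1 h2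
        tendsto_divide_at_top[OF tendsto_const filterlim_real_sequentially])
  thus ?thesis unfolding inner_error_def by (simp add: add_divide_distrib)
qed

lemma outer_error_small: "(\<lambda>m. outer_error m / real m powr (1 + \<sigma>)) \<longlonglongrightarrow> 0"
proof -
  have "(\<lambda>m. ln (mons_bound m) / real m * (1 / real m powr \<sigma>) + ln (mpoly_length (P 0)) / real m powr (1 + \<sigma>)
      - (\<gamma> + h2 m) / real m powr \<sigma>) \<longlonglongrightarrow> 0 * 0 + 0 - 0"
    by (intro tendsto_add tendsto_diff tendsto_mult ln_mons_bound_small
        tendsto_divide_at_top[OF tendsto_const real_powr_at_top]
        tendsto_divide_at_top[OF tendsto_add[OF tendsto_const h2] real_powr_at_top])
      (use \<sigma>_pos in auto)
  hence "(\<lambda>m. ln (mons_bound m) / real m * (1 / real m powr \<sigma>) + ln (mpoly_length (P 0)) / real m powr (1 + \<sigma>)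
      - (\<gamma> + h2 m) / real m powr \<sigma>) \<longlonglongrightarrow> 0" by simp
  moreover have "ln (mons_bound m) / real m * (1 / real m powr \<sigma>) + ln (mpoly_length (P 0)) / real m powr (1 + \<sigma>)
      - (\<gamma> + h2 m) / real m powr \<sigma> = outer_error m / real m powr (1 + \<sigma>)" if m: "1 \<le> m" for m
    using m unfolding outer_error_def by (simp add: powr_add field_simps)
  ultimately show ?thesis by (rule LIMSEQ_transform_ge_1)
qed

text \<open>The main term lam (1+sigma) m^sigma of the ratio exponent contributes to the limit
  only in the critical case sigma = 1.\<close>

lemma powr_\<sigma>_minus_1: "(\<lambda>m. real m powr (\<sigma> - 1)) \<longlonglongrightarrow> (if \<sigma> = 1 then 1 else 0)"
proof (cases "\<sigma> = 1")
  case True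
  have "\<forall>\<^sub>F m in sequentially. 1 = real m powr (\<sigma> - 1)"
    unfolding eventually_sequentially True by (intro exI[of _ 1]) auto
  thus ?thesis using True tendsto_cong[of "\<lambda>_. 1"] by fastforce
next
  case False
  hence "\<sigma> - 1 < 0" using \<sigma>_le_1 by simp
  hence "(\<lambda>m. real m powr (\<sigma> - 1)) \<longlonglongrightarrow> 0"
    by (rule tendsto_neg_powr) (rule filterlim_real_sequentially)
  thus ?thesis using False by simp
qed

text \<open>Dividing main_estimate by m powr (1 + sigma) and letting m tend to infinity.\<close>

theorem limit_bound:
  "lam \<le> \<delta> ^ t / fact t * (lam * (1 + \<sigma>) * (if \<sigma> = 1 then 1 else 0) + (\<alpha> + \<beta> - \<gamma>))"
proof -
  define R where "R m = mons_bound m / real m powr \<sigma>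
      * (lam * (1 + \<sigma>) * real m powr (\<sigma> - 1) + (\<alpha> + \<beta> - \<gamma>) + inner_error m / real m)
      + outer_error m / real m powr (1 + \<sigma>)" for m
  have "R \<longlonglongrightarrow> \<delta> ^ t / fact t * (lam * (1 + \<sigma>) * (if \<sigma> = 1 then 1 else 0) + (\<alpha> + \<beta> - \<gamma>) + 0) + 0"
    unfolding R_def
    by (intro tendsto_add tendsto_mult tendsto_const mons_bound_asymp powr_\<sigma>_minus_1
        inner_error_small outer_error_small)
  moreover have "lam \<le> R m" if m: "1 \<le> m" for m
  proof -
    define W where "W = real m powr \<sigma>"
    have M: "0 < real m" and W: "0 < W" unfolding W_def using m by auto
    have m_1\<sigma>: "real m powr (1 + \<sigma>) = real m * W" and m_\<sigma>1: "real m powr (\<sigma> - 1) = W / real m"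
      unfolding W_def using m by (simp_all add: powr_add powr_diff)
    have "R m = (mons_bound m * (lam * (1 + \<sigma>) * W + (\<alpha> + \<beta> - \<gamma>) * real m + inner_error m)
        + outer_error m) / (real m * W)"
      unfolding R_def m_1\<sigma> m_\<sigma>1 W_def[symmetric] using M W by (simp add: field_simps)
    moreover have "lam * (real m * W) \<le> mons_bound m * (lam * (1 + \<sigma>) * W + (\<alpha> + \<beta> - \<gamma>) * real m
        + inner_error m) + outer_error m"
      using main_estimate[of m] unfolding m_1\<sigma> W_def by simp
    ultimately show ?thesis using M W by (simp add: pos_le_divide_eq)
  qed
  ultimately show ?thesis
    by (intro LIMSEQ_le_const[of R]) (auto intro: exI[of _ 1])
qed

end


theorem mainTheorem5:
  fixes t :: nat and \<theta> :: "nat \<Rightarrow> real"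
    and \<beta> \<delta> \<kappa> lam \<alpha> \<gamma> :: real
    and P :: "nat \<Rightarrow> mpoly_int"
  assumes t_pos: "t \<ge> 1"
    and pos: "\<beta> > 0" "\<delta> > 0" "\<kappa> > 0" "lam > 0"
    and kappa_le: "\<kappa> \<le> 1 / real t"
    and poly: "\<And>n. is_mpoly t (P n)"
    and deg: "\<exists>f. f \<in> o(\<lambda>n. real n powr \<kappa>) \<and>
                 (\<forall>n. total_deg_le t (P n) (\<delta> * real n powr \<kappa> + f n))"
    and len: "\<exists>g. g \<in> o(\<lambda>n. real n) \<and>
                 (\<forall>n. mpoly_length (P n) \<le> exp (\<beta> * real n + g n))"
    and bounds: "\<exists>h1 h2. h1 \<longlonglongrightarrow> 0 \<and> h2 \<longlonglongrightarrow> 0 \<and>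
        (\<forall>n. exp (- lam * real n powr (1 + real t * \<kappa>) - (\<alpha> + h1 n) * real n)
                \<le> \<bar>mpoly_eval t (P n) \<theta>\<bar> \<and>
             \<bar>mpoly_eval t (P n) \<theta>\<bar>
                \<le> exp (- lam * real n powr (1 + real t * \<kappa>) - (\<gamma> + h2 n) * real n))"
  shows "(\<kappa> = 1 / real t \<longrightarrow>
            lam * (1 - 2 * \<delta> ^ t / fact t) \<le> \<delta> ^ t * (\<alpha> + \<beta> - \<gamma>) / fact t)
       \<and> (\<kappa> < 1 / real t \<longrightarrow> lam \<le> \<delta> ^ t * (\<alpha> + \<beta> - \<gamma>) / fact t)"
proof -
  obtain f where "f \<in> o(\<lambda>n. real n powr \<kappa>)" "\<And>n. total_deg_le t (P n) (\<delta> * real n powr \<kappa> + f n)"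
    using deg by blast
  moreover obtain g where "g \<in> o(\<lambda>n. real n)" "\<And>n. mpoly_length (P n) \<le> exp (\<beta> * real n + g n)"
    using len by blast
  moreover obtain h1 h2 where "h1 \<longlonglongrightarrow> 0" "h2 \<longlonglongrightarrow> 0"
    "\<And>n. exp (- lam * real n powr (1 + real t * \<kappa>) - (\<alpha> + h1 n) * real n) \<le> \<bar>mpoly_eval t (P n) \<theta>\<bar>"
    "\<And>n. \<bar>mpoly_eval t (P n) \<theta>\<bar> \<le> exp (- lam * real n powr (1 + real t * \<kappa>) - (\<gamma> + h2 n) * real n)"
    using bounds by blast
  ultimately interpret small_values t \<theta> \<beta> \<delta> \<kappa> lam \<alpha> \<gamma> P f g h1 h2
    using t_pos pos kappa_le poly by unfold_locales
  have \<sigma>_eq_1: "\<sigma> = 1 \<longleftrightarrow> \<kappa> = 1 / real t"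
    using t_pos unfolding \<sigma>_def by (auto simp: field_simps)
  define c where "c = \<delta> ^ t / fact t"
  have bound: "lam \<le> c * (lam * (1 + \<sigma>) * (if \<sigma> = 1 then 1 else 0)) + c * (\<alpha> + \<beta> - \<gamma>)"
    using limit_bound unfolding c_def by (simp add: distrib_left)
  have rhs: "\<delta> ^ t * (\<alpha> + \<beta> - \<gamma>) / fact t = c * (\<alpha> + \<beta> - \<gamma>)" unfolding c_def by simp
  show ?thesis
  proof (intro conjI impI)
    assume "\<kappa> = 1 / real t"
    hence "lam \<le> 2 * c * lam + c * (\<alpha> + \<beta> - \<gamma>)" using bound \<sigma>_eq_1 by simp
    moreover have "lam * (1 - 2 * \<delta> ^ t / fact t) = lam - 2 * c * lam"
      unfolding c_def by (simp add: algebra_simps)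
    ultimately show "lam * (1 - 2 * \<delta> ^ t / fact t) \<le> \<delta> ^ t * (\<alpha> + \<beta> - \<gamma>) / fact t"
      unfolding rhs by linarith
  next
    assume "\<kappa> < 1 / real t"
    thus "lam \<le> \<delta> ^ t * (\<alpha> + \<beta> - \<gamma>) / fact t" using bound \<sigma>_eq_1 unfolding rhs by simp
  qed
qed

end
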